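(* With the notation of the context, let $\alpha^*=\inf_{x\in\Delta}G(x)$. Then there exists $x^*\in\Delta$ with $G(x^* )=\alpha^*$.
   Context: Fix an integer $n\ge2$ and free generators $\xi_1,\dots,\xi_n$ of a free group; throughout $i,j,k\in\{1,\dots,n\}$ and $t,s,p\in\{-1,+1\}$. Let $\Psi$ be the set of reduced words $\xi_i^{2t}$; $\xi_i^t\xi_j^{2s}$ ($i\ne j$); $\xi_i^t\xi_j^s\xi_k^p$ ($i\ne j$, $j\ne k$). Types: type 1 $=\xi_i^{2t}$; type 2 $=\xi_i^t\xi_j^{2s}$; type 3 $=\xi_i^t\xi_j^s\xi_i^t$; type 4 $=\xi_i^t\xi_j^s\xi_i^{-t}$; type 5 $=\xi_i^t\xi_j^s\xi_k^p$ with $i,j,k$ pairwise distinct. For a letter $\xi_a^x$ let $S(\xi_a^x)\subset\Psi$ be the set of words in $\Psi$ beginning with $\xi_a^x$, namely $\{\xi_a^{2x}\}\cup\{\xi_a^x\xi_j^{2s}\}\cup\{\xi_a^x\xi_j^s\xi_k^p\}$; for $a\ne b$ let $S(\xi_a^x\xi_b^y)=\{\xi_a^x\xi_b^{2y}\}\cup\{\xi_a^x\xi_b^y\xi_k^p: k\ne b\}$. A relation $r$ is a pair $(\psi_r,\Psi_r)$ with $\psi_r\in\Psi$, $\Psi_r\subseteq\Psi$; the relations considered are (indices $i_0\ne j_0$, and in type 5 $i_0,j_0,k_0$ pairwise distinct, all signs arbitrary): 1a: $\psi_r=\xi_{i_0}^{2t_0}$, $\Psi_r=\Psi\setminus S(\xi_{i_0}^{t_0})$;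 1b: $\psi_r=\xi_{i_0}^{2t_0}$, $\Psi_r=\Psi\setminus\{\xi_{i_0}^{t_0}\xi_{j_0}^{s_0}\xi_{i_0}^{t_0}\}$; 2a: $\psi_r=\xi_{i_0}^{t_0}\xi_{j_0}^{2s_0}$, $\Psi_r=\Psi\setminus\{\xi_{j_0}^{2s_0}\}$; 2b: $\psi_r=\xi_{i_0}^{t_0}\xi_{j_0}^{2s_0}$, $\Psi_r=\Psi\setminus S(\xi_{i_0}^{t_0}\xi_{j_0}^{s_0})$; 3a: $\psi_r=\xi_{i_0}^{t_0}\xi_{j_0}^{s_0}\xi_{i_0}^{t_0}$, $\Psi_r=\Psi\setminus S(\xi_{j_0}^{s_0}\xi_{i_0}^{t_0})$; 3b: $\psi_r=\xi_{i_0}^{t_0}\xi_{j_0}^{s_0}\xi_{i_0}^{t_0}$, $\Psi_r=\Psi\setminus\{\xi_{i_0}^{2t_0}\}$; 4a: $\psi_r=\xi_{i_0}^{t_0}\xi_{j_0}^{s_0}\xi_{i_0}^{-t_0}$, $\Psi_r=\Psi\setminus S(\xi_{j_0}^{s_0}\xi_{i_0}^{-t_0})$; 4b: $\psi_r=\xi_{i_0}^{t_0}\xi_{j_0}^{s_0}\xi_{i_0}^{-t_0}$, $\Psi_r=S(\xi_{i_0}^{t_0})$; 5a: $\psi_r=\xi_{i_0}^{t_0}\xi_{j_0}^{s_0}\xi_{k_0}^{p_0}$, $\Psi_r=\Psi\setminus S(\xi_{j_0}^{s_0}\xi_{k_0}^{p_0})$; 5b: $\psi_r=\xi_{i_0}^{t_0}\xi_{j_0}^{s_0}\xi_{k_0}^{p_0}$,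 $\Psi_r=\Psi\setminus S(\xi_{i_0}^{t_0}\xi_{k_0}^{p_0})$. Let $\mathcal{G}$ be the collection of all these relations and $\mathcal{F}\subset\mathcal{G}$ the relations of types 1a, 2b, 3a, 4b, 5a. Let $\Delta=\{x\in\mathbb{R}^\Psi: x(\psi)>0\ \forall\psi,\ \sum_{\psi\in\Psi}x(\psi)=1\}$. For a relation $r$ and $x\in\Delta$, put $x_r=x(\psi_r)$, $X_r=\sum_{\psi\in\Psi_r}x(\psi)$ and $f_r(x)=\frac{1-x_r}{x_r}\cdot\frac{1-X_r}{X_r}$. Define $F(x)=\max_{r\in\mathcal{F}}f_r(x)$ and $G(x)=\max_{r\in\mathcal{G}}f_r(x)$ on $\Delta$. *)

theory Defs
  imports Complex_Main
begin

text \<open>A letter xi_i^t is encoded as the pair (i, t) with i in {1..n} and t in {-1, 1}.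
  A reduced word is the list of its letters (so xi_i^{2t} = [(i,t),(i,t)]).\<close>

type_synonym letter = "nat \<times> int"
type_synonym word = "letter list"

definition letters :: "nat \<Rightarrow> letter set" where
  "letters n = {1..n} \<times> {-1, 1}"

definition Psi :: "nat \<Rightarrow> word set" where
  "Psi n =
     {[(i,t),(i,t)] | i t. (i,t) \<in> letters n}
   \<union> {[(i,t),(j,s),(j,s)] | i t j s. (i,t) \<in> letters n \<and> (j,s) \<in> letters n \<and> i \<noteq> j}
   \<union> {[(i,t),(j,s),(k,p)] | i t j s k p. (i,t) \<in> letters n \<and> (j,s) \<in> letters n \<and>
        (k,p) \<in> letters n \<and> i \<noteq> j \<and> j \<noteq> k}"

definition S1 :: "nat \<Rightarrow> letter \<Rightarrow> word set" where
  "S1 n l = {w \<in> Psi n. take 1 w = [l]}"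

definition S2 :: "nat \<Rightarrow> letter \<Rightarrow> letter \<Rightarrow> word set" where
  "S2 n l1 l2 = {w \<in> Psi n. take 2 w = [l1, l2]}"

definition rel1a :: "nat \<Rightarrow> (word \<times> word set) set" where
  "rel1a n = {([(i,t),(i,t)], Psi n - S1 n (i,t)) | i t. (i,t) \<in> letters n}"
definition rel1b :: "nat \<Rightarrow> (word \<times> word set) set" where
  "rel1b n = {([(i,t),(i,t)], Psi n - {[(i,t),(j,s),(i,t)]}) | i t j s.
      (i,t) \<in> letters n \<and> (j,s) \<in> letters n \<and> i \<noteq> j}"
definition rel2a :: "nat \<Rightarrow> (word \<times> word set) set" where
  "rel2a n = {([(i,t),(j,s),(j,s)], Psi n - {[(j,s),(j,s)]}) | i t j s.
      (i,t) \<in> letters n \<and> (j,s) \<in> letters n \<and> i \<noteq> j}"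
definition rel2b :: "nat \<Rightarrow> (word \<times> word set) set" where
  "rel2b n = {([(i,t),(j,s),(j,s)], Psi n - S2 n (i,t) (j,s)) | i t j s.
      (i,t) \<in> letters n \<and> (j,s) \<in> letters n \<and> i \<noteq> j}"
definition rel3a :: "nat \<Rightarrow> (word \<times> word set) set" where
  "rel3a n = {([(i,t),(j,s),(i,t)], Psi n - S2 n (j,s) (i,t)) | i t j s.
      (i,t) \<in> letters n \<and> (j,s) \<in> letters n \<and> i \<noteq> j}"
definition rel3b :: "nat \<Rightarrow> (word \<times> word set) set" where
  "rel3b n = {([(i,t),(j,s),(i,t)], Psi n - {[(i,t),(i,t)]}) | i t j s.
      (i,t) \<in> letters n \<and> (j,s) \<in> letters n \<and> i \<noteq> j}"
definition rel4a :: "nat \<Rightarrow> (word \<times> word set) set" where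
  "rel4a n = {([(i,t),(j,s),(i,-t)], Psi n - S2 n (j,s) (i,-t)) | i t j s.
      (i,t) \<in> letters n \<and> (j,s) \<in> letters n \<and> i \<noteq> j}"
definition rel4b :: "nat \<Rightarrow> (word \<times> word set) set" where
  "rel4b n = {([(i,t),(j,s),(i,-t)], S1 n (i,t)) | i t j s.
      (i,t) \<in> letters n \<and> (j,s) \<in> letters n \<and> i \<noteq> j}"
definition rel5a :: "nat \<Rightarrow> (word \<times> word set) set" where
  "rel5a n = {([(i,t),(j,s),(k,p)], Psi n - S2 n (j,s) (k,p)) | i t j s k p.
      (i,t) \<in> letters n \<and> (j,s) \<in> letters n \<and> (k,p) \<in> letters n \<and>
      i \<noteq> j \<and> j \<noteq> k \<and> i \<noteq> k}"
definition rel5b :: "nat \<Rightarrow> (word \<times> word set) set" where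
  "rel5b n = {([(i,t),(j,s),(k,p)], Psi n - S2 n (i,t) (k,p)) | i t j s k p.
      (i,t) \<in> letters n \<and> (j,s) \<in> letters n \<and> (k,p) \<in> letters n \<and>
      i \<noteq> j \<and> j \<noteq> k \<and> i \<noteq> k}"

definition Grel :: "nat \<Rightarrow> (word \<times> word set) set" where
  "Grel n = rel1a n \<union> rel1b n \<union> rel2a n \<union> rel2b n \<union> rel3a n \<union> rel3b n
            \<union> rel4a n \<union> rel4b n \<union> rel5a n \<union> rel5b n"

definition Frel :: "nat \<Rightarrow> (word \<times> word set) set" where
  "Frel n = rel1a n \<union> rel2b n \<union> rel3a n \<union> rel4b n \<union> rel5a n"

definition Delta :: "nat \<Rightarrow> (word \<Rightarrow> real) set" where
  "Delta n = {x. (\<forall>w \<in> Psi n. x w > 0) \<and> (\<forall>w. w \<notin> Psi n \<longrightarrow> x w = 0)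
                 \<and> (\<Sum>w \<in> Psi n. x w) = 1}"

definition frel :: "(word \<times> word set) \<Rightarrow> (word \<Rightarrow> real) \<Rightarrow> real" where
  "frel r x = (let xr = x (fst r); Xr = (\<Sum>w \<in> snd r. x w)
               in ((1 - xr) / xr) * ((1 - Xr) / Xr))"

definition Ffun :: "nat \<Rightarrow> (word \<Rightarrow> real) \<Rightarrow> real" where
  "Ffun n x = Max ((\<lambda>r. frel r x) ` Frel n)"

definition Gfun :: "nat \<Rightarrow> (word \<Rightarrow> real) \<Rightarrow> real" where
  "Gfun n x = Max ((\<lambda>r. frel r x) ` Grel n)"

end

theory Submission
  imports Defs "HOL-Analysis.Analysis"
begin

(* Take a minimizing sequence of G in the open simplex and, by compactness of the closed simplex,
   a subsequence converging pointwise to some z. G stays bounded along it, so for every relation r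
   we have (1 - x_r)(1 - X_r) <= M x_r X_r; hence if z vanishes at psi_r, then z carries all its
   mass on Psi_r and vanishes on Psi - Psi_r. For the relations 1a, 2b, 3b, 4b and 5b these
   implications propagate a single zero of z to all of Psi, which is impossible since z sums to 1.
   So z lies in the open simplex, where every f_r is continuous, and therefore G(z) <= inf G. *)

definition open_simplex :: "'a set \<Rightarrow> ('a \<Rightarrow> real) set" where
  "open_simplex P = {x. (\<forall>w \<in> P. x w > 0) \<and> (\<forall>w. w \<notin> P \<longrightarrow> x w = 0) \<and> sum x P = 1}"

definition closed_simplex :: "'a set \<Rightarrow> ('a \<Rightarrow> real) set" where
  "closed_simplex P = {x. (\<forall>w \<in> P. x w \<ge> 0) \<and> (\<forall>w. w \<notin> P \<longrightarrow> x w = 0) \<and> sum x P = 1}"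

lemma Delta_eq_open_simplex: "Delta n = open_simplex (Psi n)"
  by (simp add: Delta_def open_simplex_def)

lemma open_simplex_subset_closed_simplex: "open_simplex P \<subseteq> closed_simplex P"
  by (auto simp: open_simplex_def closed_simplex_def less_imp_le)

lemma closed_simplex_nonneg: "x \<in> closed_simplex P \<Longrightarrow> 0 \<le> x w"
  by (cases "w \<in> P") (auto simp: closed_simplex_def)

lemma closed_simplex_sum_le_one:
  assumes "finite P" "x \<in> closed_simplex P"
  shows "sum x A \<le> 1"
proof (cases "finite A")
  case True
  have "sum x A = sum x (A \<inter> P)"
    by (rule sum.mono_neutral_right) (use True assms in \<open>auto simp: closed_simplex_def\<close>)
  also have "\<dots> \<le> sum x P"
    by (rule sum_mono2) (use assms closed_simplex_nonneg in auto)
  finally show ?thesis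
    using assms by (simp add: closed_simplex_def)
qed simp

lemma open_simplex_nonempty:
  assumes "finite P" "P \<noteq> {}"
  shows "open_simplex P \<noteq> {}"
proof -
  define u where "u w = (if w \<in> P then 1 / real (card P) else 0)" for w
  have "u \<in> open_simplex P"
    using assms by (simp add: open_simplex_def u_def card_gt_0_iff)
  then show ?thesis by blast
qed

lemma compact_closed_simplex:
  assumes "finite P"
  shows "compact (closed_simplex P)"
proof -
  define B where "B = Pi\<^sub>E UNIV (\<lambda>w. if w \<in> P then {0..1} else {0::real})"
  have "compact B"
    using compactin_PiE[of "\<lambda>_. euclidean" UNIV "\<lambda>w. if w \<in> P then {0..1} else {0::real}"]
    by (simp add: B_def euclidean_product_topology)
  moreover have "closed {x :: 'a \<Rightarrow> real. sum x P = 1}"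
    by (intro closed_Collect_eq continuous_intros continuous_on_product_coordinates)
  moreover have "closed_simplex P = B \<inter> {x. sum x P = 1}"
  proof (intro set_eqI iffI)
    fix x assume x: "x \<in> closed_simplex P"
    have "x w \<le> 1" for w
      using closed_simplex_sum_le_one[OF assms x, of "{w}"] by simp
    with x show "x \<in> B \<inter> {x. sum x P = 1}"
      by (auto simp: B_def closed_simplex_def PiE_iff)
  next
    fix x assume x: "x \<in> B \<inter> {x. sum x P = 1}"
    have mem: "x w \<in> (if w \<in> P then {0..1} else {0})" for w
      using x unfolding B_def PiE_iff by blast
    show "x \<in> closed_simplex P"
      unfolding closed_simplex_def
    proof (intro CollectI conjI ballI allI impI)
      show "0 \<le> x w" if "w \<in> P" for w
        using mem[of w] that by simp
      show "x w = 0" if "w \<notin> P" for w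
        using mem[of w] that by simp
    qed (use x in simp)
  qed
  ultimately show ?thesis
    by (simp add: compact_Int_closed)
qed

lemma frel_nonneg:
  assumes "finite P" "x \<in> closed_simplex P"
  shows "0 \<le> frel r x"
proof -
  have "0 \<le> x (fst r)" "x (fst r) \<le> 1"
    using closed_simplex_nonneg[OF assms(2)] closed_simplex_sum_le_one[OF assms, of "{fst r}"]
    by auto
  moreover have "0 \<le> sum x (snd r)" "sum x (snd r) \<le> 1"
    using closed_simplex_nonneg[OF assms(2)] closed_simplex_sum_le_one[OF assms]
    by (auto intro: sum_nonneg)
  ultimately show ?thesis
    by (simp add: frel_def Let_def)
qed

lemma tendsto_frel:
  assumes "\<And>w. (\<lambda>k. y k w) \<longlonglongrightarrow> x w" "x (fst r) \<noteq> 0" "sum x (snd r) \<noteq> 0"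
  shows "(\<lambda>k. frel r (y k)) \<longlonglongrightarrow> frel r x"
  unfolding frel_def Let_def using assms by (intro tendsto_intros tendsto_sum) auto

lemma bounded_frel_limit_vanishes:
  assumes P: "finite P" "\<psi> \<in> P" "Q \<subseteq> P" "Q \<noteq> {}"
    and x: "\<And>k. x k \<in> open_simplex P" "\<And>w. (\<lambda>k. x k w) \<longlonglongrightarrow> z w"
    and bound: "\<And>k. frel (\<psi>, Q) (x k) \<le> M"
    and z: "z \<in> closed_simplex P" "z \<psi> = 0"
  shows "\<forall>w \<in> P - Q. z w = 0"
proof -
  define a where "a k = x k \<psi>" for k
  define X where "X k = sum (x k) Q" for k
  have a_pos: "a k > 0" for k
    using x(1)[of k] P by (simp add: a_def open_simplex_def)
  have X_pos: "X k > 0" for k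
    unfolding X_def
    by (rule sum_pos) (use x(1)[of k] P finite_subset in \<open>auto simp: open_simplex_def\<close>)
  have ineq: "(1 - a k) * (1 - X k) \<le> M * a k * X k" for k
  proof -
    have "((1 - a k) / a k) * ((1 - X k) / X k) \<le> M"
      using bound[of k] by (simp add: frel_def Let_def a_def X_def)
    then show ?thesis
      using a_pos[of k] X_pos[of k] by (simp add: field_simps)
  qed
  have "(\<lambda>k. (1 - a k) * (1 - X k)) \<longlonglongrightarrow> (1 - z \<psi>) * (1 - sum z Q)"
    unfolding a_def X_def by (intro tendsto_intros tendsto_sum x(2))
  moreover have "(\<lambda>k. M * a k * X k) \<longlonglongrightarrow> M * z \<psi> * sum z Q"
    unfolding a_def X_def by (intro tendsto_intros tendsto_sum x(2))
  ultimately have "(1 - z \<psi>) * (1 - sum z Q) \<le> M * z \<psi> * sum z Q"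
    using ineq by (intro LIMSEQ_le) auto
  then have "sum z (P - Q) \<le> 0"
    using z sum_diff[OF P(1) P(3), of z] by (simp add: closed_simplex_def)
  moreover have "\<forall>w \<in> P - Q. 0 \<le> z w"
    using closed_simplex_nonneg[OF z(1)] by blast
  ultimately show ?thesis
    using sum_nonneg_eq_0_iff[of "P - Q" z] sum_nonneg[of "P - Q" z] P(1) by auto
qed

lemma tendsto_fun_apply:
  fixes l :: "'a \<Rightarrow> 'b::topological_space"
  assumes "(f \<longlongrightarrow> l) F"
  shows "((\<lambda>k. f k w) \<longlongrightarrow> l w) F"
  using assms by (rule continuous_on_tendsto_compose[OF continuous_on_product_coordinates]) auto

(* Relations with empty Psi_r are exempt: for them f_r is identically 0 (division by zero), so
   bounding f_r says nothing. *)
definition zero_set_closed :: "'a set \<Rightarrow> ('a \<times> 'a set) set \<Rightarrow> ('a \<Rightarrow> real) \<Rightarrow> bool" where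
  "zero_set_closed P R z \<longleftrightarrow> (\<forall>(\<psi>, Q) \<in> R. Q \<noteq> {} \<longrightarrow> z \<psi> = 0 \<longrightarrow> (\<forall>w \<in> P - Q. z w = 0))"

definition max_frel :: "(word \<times> word set) set \<Rightarrow> (word \<Rightarrow> real) \<Rightarrow> real" where
  "max_frel R x = Max ((\<lambda>r. frel r x) ` R)"

lemma Gfun_eq_max_frel: "Gfun n = max_frel (Grel n)"
  by (simp add: fun_eq_iff Gfun_def max_frel_def)

lemma frel_le_max_frel: "finite R \<Longrightarrow> r \<in> R \<Longrightarrow> frel r x \<le> max_frel R x"
  unfolding max_frel_def by (intro Max_ge) auto

lemma max_frel_nonneg:
  assumes "finite P" "finite R" "R \<noteq> {}" "x \<in> closed_simplex P"
  shows "0 \<le> max_frel R x"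
proof -
  obtain r where "r \<in> R"
    using assms(3) by blast
  then show ?thesis
    using frel_nonneg[OF assms(1,4)] frel_le_max_frel[OF assms(2)] by (meson order_trans)
qed

lemma obtain_minimizing_sequence:
  fixes f :: "'a \<Rightarrow> real"
  assumes "S \<noteq> {}" "bdd_below (f ` S)"
  obtains x where "\<And>k. x k \<in> S" "(\<lambda>k. f (x k)) \<longlonglongrightarrow> (INF y \<in> S. f y)"
proof -
  have "(INF y \<in> S. f y) \<in> closure (f ` S)"
    using assms by (intro closure_contains_Inf) auto
  then obtain g where g: "\<forall>k. g k \<in> f ` S" "g \<longlonglongrightarrow> (INF y \<in> S. f y)"
    by (auto simp: closure_sequential)
  then have "\<forall>k. \<exists>y. y \<in> S \<and> g k = f y"
    by blast
  then obtain x where "\<forall>k. x k \<in> S \<and> g k = f (x k)"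
    by (rule exE[OF choice])
  then have "\<forall>k. x k \<in> S" "g = (\<lambda>k. f (x k))"
    by auto
  with g(2) show thesis
    by (intro that) auto
qed

lemma bounded_limit_zero_set_closed:
  assumes "finite P" "finite R" "\<And>\<psi> Q. (\<psi>, Q) \<in> R \<Longrightarrow> \<psi> \<in> P \<and> Q \<subseteq> P"
    and x: "\<And>k. x k \<in> open_simplex P" "\<And>w. (\<lambda>k. x k w) \<longlonglongrightarrow> z w"
    and M: "\<And>k. max_frel R (x k) \<le> M"
    and z: "z \<in> closed_simplex P"
  shows "zero_set_closed P R z"
proof -
  have "\<forall>w \<in> P - Q. z w = 0" if r: "(\<psi>, Q) \<in> R" "Q \<noteq> {}" "z \<psi> = 0" for \<psi> Q
  proof (rule bounded_frel_limit_vanishes[of P \<psi> Q x])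
    show "frel (\<psi>, Q) (x k) \<le> M" for k
      using order_trans[OF frel_le_max_frel[OF assms(2) r(1)] M] .
  qed (use assms(1) assms(3)[OF r(1)] r(2,3) x z in auto)
  then show ?thesis
    unfolding zero_set_closed_def by blast
qed

lemma closed_simplex_spreading_zeros_imp_open:
  assumes "z \<in> closed_simplex P" "\<And>\<psi>. \<psi> \<in> P \<Longrightarrow> z \<psi> = 0 \<Longrightarrow> \<forall>w \<in> P. z w = 0"
  shows "z \<in> open_simplex P"
proof -
  have "z \<psi> \<noteq> 0" if "\<psi> \<in> P" for \<psi>
  proof
    assume "z \<psi> = 0"
    then have "sum z P = 0"
      using assms(2)[OF that] by simp
    with assms(1) show False
      by (simp add: closed_simplex_def)
  qed
  then show ?thesis
    using assms(1) closed_simplex_nonneg[OF assms(1)]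
    by (auto simp: open_simplex_def closed_simplex_def less_le)
qed

lemma max_frel_limit_le:
  assumes "finite R" "R \<noteq> {}" "0 \<le> \<alpha>"
    and "\<And>w. (\<lambda>k. y k w) \<longlonglongrightarrow> z w" "(\<lambda>k. max_frel R (y k)) \<longlonglongrightarrow> \<alpha>"
  shows "max_frel R z \<le> \<alpha>"
proof -
  have "frel r z \<le> \<alpha>" if r: "r \<in> R" for r
  proof (cases "z (fst r) = 0 \<or> sum z (snd r) = 0")
    case True
    then show ?thesis
      using assms(3) by (auto simp: frel_def)
  next
    case False
    then have "(\<lambda>k. frel r (y k)) \<longlonglongrightarrow> frel r z"
      using assms(4) by (intro tendsto_frel) auto
    then show ?thesis
      using frel_le_max_frel[OF assms(1) r] assms(5) by (intro LIMSEQ_le) auto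
  qed
  then show ?thesis
    unfolding max_frel_def using assms(1,2) by (intro Max.boundedI) auto
qed

theorem max_frel_attains_Inf:
  assumes P: "finite P" "P \<noteq> {}"
    and R: "finite R" "R \<noteq> {}" "\<And>\<psi> Q. (\<psi>, Q) \<in> R \<Longrightarrow> \<psi> \<in> P \<and> Q \<subseteq> P"
    and spread: "\<And>z \<psi>. zero_set_closed P R z \<Longrightarrow> \<psi> \<in> P \<Longrightarrow> z \<psi> = 0 \<Longrightarrow> \<forall>w \<in> P. z w = 0"
  shows "\<exists>x \<in> open_simplex P. max_frel R x = (INF y \<in> open_simplex P. max_frel R y)"
proof -
  let ?D = "open_simplex P" and ?G = "max_frel R"
  define \<alpha> where "\<alpha> = (INF y \<in> ?D. ?G y)"
  have G_nonneg: "0 \<le> ?G y" if "y \<in> ?D" for y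
    using max_frel_nonneg[OF P(1) R(1,2)] open_simplex_subset_closed_simplex that by blast
  have bdd: "bdd_below (?G ` ?D)"
    using G_nonneg by (intro bdd_belowI) auto
  obtain x where x: "\<And>k. x k \<in> ?D" and Gx: "(\<lambda>k. ?G (x k)) \<longlonglongrightarrow> \<alpha>"
    unfolding \<alpha>_def using obtain_minimizing_sequence[OF open_simplex_nonempty[OF P] bdd] by blast
  obtain M where M: "\<And>k. ?G (x k) \<le> M"
    using convergent_imp_Bseq[OF convergentI[OF Gx]] unfolding Bseq_def by (auto dest: abs_le_D1)
  have "seq_compact (closed_simplex P)"
    using compact_closed_simplex[OF P(1)] by (rule compact_imp_seq_compact)
  moreover have "\<forall>k. x k \<in> closed_simplex P"
    using x open_simplex_subset_closed_simplex by blast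
  ultimately obtain z \<sigma> where z: "z \<in> closed_simplex P" and \<sigma>: "strict_mono \<sigma>"
    and "(x \<circ> \<sigma>) \<longlonglongrightarrow> z"
    by (rule seq_compactE)
  then have z_lim: "(\<lambda>k. x (\<sigma> k) w) \<longlonglongrightarrow> z w" for w
    using tendsto_fun_apply[of "x \<circ> \<sigma>" z] by (simp add: o_def)
  have "zero_set_closed P R z"
    using bounded_limit_zero_set_closed[OF P(1) R(1,3) x z_lim M z] .
  then have z_D: "z \<in> ?D"
    using closed_simplex_spreading_zeros_imp_open[OF z] spread by blast
  have \<alpha>_nonneg: "0 \<le> \<alpha>"
    unfolding \<alpha>_def using open_simplex_nonempty[OF P] G_nonneg by (intro cINF_greatest)
  have "?G z \<le> \<alpha>"
    using LIMSEQ_subseq_LIMSEQ[OF Gx \<sigma>]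
    by (intro max_frel_limit_le[OF R(1,2) \<alpha>_nonneg z_lim]) (simp add: o_def)
  moreover have "\<alpha> \<le> ?G z"
    unfolding \<alpha>_def using bdd z_D by (rule cINF_lower)
  ultimately show ?thesis
    using z_D unfolding \<alpha>_def by (intro bexI) auto
qed

lemma letters_uminus: "(i, t) \<in> letters n \<Longrightarrow> (i, -t) \<in> letters n"
  by (auto simp: letters_def)

lemma other_letter:
  assumes "n \<ge> 2"
  obtains j where "(j, 1) \<in> letters n" "j \<noteq> i"
proof
  show "(if i = 1 then 2 else 1, 1) \<in> letters n" "(if i = 1 then 2 else 1) \<noteq> i"
    using assms by (auto simp: letters_def)
qed

lemma type1_in_Psi: "(i, t) \<in> letters n \<Longrightarrow> [(i, t), (i, t)] \<in> Psi n"
  unfolding Psi_def by blast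

lemma type2_in_Psi:
  "(i, t) \<in> letters n \<Longrightarrow> (j, s) \<in> letters n \<Longrightarrow> i \<noteq> j \<Longrightarrow> [(i, t), (j, s), (j, s)] \<in> Psi n"
  unfolding Psi_def by blast

lemma triple_in_Psi:
  "(i, t) \<in> letters n \<Longrightarrow> (j, s) \<in> letters n \<Longrightarrow> (k, p) \<in> letters n \<Longrightarrow> i \<noteq> j \<Longrightarrow> j \<noteq> k
    \<Longrightarrow> [(i, t), (j, s), (k, p)] \<in> Psi n"
  unfolding Psi_def by blast

lemma type4_in_Psi:
  "(i, t) \<in> letters n \<Longrightarrow> (j, s) \<in> letters n \<Longrightarrow> i \<noteq> j \<Longrightarrow> [(i, t), (j, s), (i, -t)] \<in> Psi n"
  by (intro triple_in_Psi letters_uminus) auto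

lemma Psi_nonempty: "n \<ge> 1 \<Longrightarrow> Psi n \<noteq> {}"
  using type1_in_Psi[of 1 1 n] by (auto simp: letters_def)

lemma finite_Psi: "finite (Psi n)"
proof (rule finite_subset)
  show "Psi n \<subseteq> {w. set w \<subseteq> letters n \<and> length w \<le> 3}"
    unfolding Psi_def by auto
  show "finite {w. set w \<subseteq> letters n \<and> length w \<le> 3}"
    by (rule finite_lists_length_le) (simp add: letters_def)
qed

lemma Grel_subset: "(\<psi>, Q) \<in> Grel n \<Longrightarrow> \<psi> \<in> Psi n \<and> Q \<subseteq> Psi n"
  unfolding Grel_def rel1a_def rel1b_def rel2a_def rel2b_def rel3a_def rel3b_def rel4a_def
    rel4b_def rel5a_def rel5b_def S1_def
  by (auto intro: type1_in_Psi type2_in_Psi triple_in_Psi type4_in_Psi)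

lemma finite_Grel: "finite (Grel n)"
proof (rule finite_subset)
  show "Grel n \<subseteq> Psi n \<times> Pow (Psi n)"
    using Grel_subset by auto
  show "finite (Psi n \<times> Pow (Psi n))"
    by (simp add: finite_Psi)
qed

lemma Grel_nonempty:
  assumes "n \<ge> 1"
  shows "Grel n \<noteq> {}"
proof -
  have "(1, 1) \<in> letters n"
    using assms by (simp add: letters_def)
  then have "([(1, 1), (1, 1)], Psi n - S1 n (1, 1)) \<in> Grel n"
    unfolding Grel_def rel1a_def by blast
  then show ?thesis by blast
qed

context
  fixes n :: nat and z :: "word \<Rightarrow> real"
  assumes closed: "zero_set_closed (Psi n) (Grel n) z"
begin

lemma Grel_zero_propagates:
  assumes "(\<psi>, Q) \<in> Grel n" "v \<in> Q" "z \<psi> = 0" "w \<in> Psi n" "w \<notin> Q"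
  shows "z w = 0"
  using closed assms unfolding zero_set_closed_def by blast

lemma type1_zero_imp_S1_zero:
  assumes "n \<ge> 2" "(i, t) \<in> letters n" "z [(i, t), (i, t)] = 0" "w \<in> S1 n (i, t)"
  shows "z w = 0"
proof -
  obtain j where j: "(j, 1) \<in> letters n" "j \<noteq> i"
    using other_letter[OF assms(1)] .
  have "([(i, t), (i, t)], Psi n - S1 n (i, t)) \<in> Grel n"
    using assms(2) unfolding Grel_def rel1a_def by blast
  moreover have "[(j, 1), (j, 1)] \<in> Psi n - S1 n (i, t)"
    using type1_in_Psi[OF j(1)] j(2) by (simp add: S1_def)
  ultimately show ?thesis
    by (rule Grel_zero_propagates) (use assms(3,4) in \<open>auto simp: S1_def\<close>)
qed

lemma type2_zero_imp_S2_zero: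
  assumes "(i, t) \<in> letters n" "(j, s) \<in> letters n" "i \<noteq> j"
    and "z [(i, t), (j, s), (j, s)] = 0" "w \<in> S2 n (i, t) (j, s)"
  shows "z w = 0"
proof -
  have "([(i, t), (j, s), (j, s)], Psi n - S2 n (i, t) (j, s)) \<in> Grel n"
    using assms(1-3) unfolding Grel_def rel2b_def by blast
  moreover have "[(i, t), (i, t)] \<in> Psi n - S2 n (i, t) (j, s)"
    using type1_in_Psi[OF assms(1)] assms(3) by (simp add: S2_def)
  ultimately show ?thesis
    by (rule Grel_zero_propagates) (use assms(4,5) in \<open>auto simp: S2_def\<close>)
qed

lemma type3_zero_imp_type1_zero:
  assumes "(i, t) \<in> letters n" "(j, s) \<in> letters n" "i \<noteq> j"
    and "z [(i, t), (j, s), (i, t)] = 0"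
  shows "z [(i, t), (i, t)] = 0"
proof -
  have "([(i, t), (j, s), (i, t)], Psi n - {[(i, t), (i, t)]}) \<in> Grel n"
    using assms(1-3) unfolding Grel_def rel3b_def by blast
  moreover have "[(i, -t), (i, -t)] \<in> Psi n - {[(i, t), (i, t)]}"
    using type1_in_Psi[OF letters_uminus[OF assms(1)]] assms(1) by (auto simp: letters_def)
  ultimately show ?thesis
    by (rule Grel_zero_propagates) (use assms(4) type1_in_Psi[OF assms(1)] in auto)
qed

lemma type4_zero_imp_zero_off_S1:
  assumes "(i, t) \<in> letters n" "(j, s) \<in> letters n" "i \<noteq> j"
    and "z [(i, t), (j, s), (i, -t)] = 0" "w \<in> Psi n" "w \<notin> S1 n (i, t)"
  shows "z w = 0"
proof -
  have "([(i, t), (j, s), (i, -t)], S1 n (i, t)) \<in> Grel n"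
    using assms(1-3) unfolding Grel_def rel4b_def by blast
  moreover have "[(i, t), (i, t)] \<in> S1 n (i, t)"
    using type1_in_Psi[OF assms(1)] by (simp add: S1_def)
  ultimately show ?thesis
    by (rule Grel_zero_propagates) (use assms(4-6) in auto)
qed

lemma type5_zero_imp_S2_zero:
  assumes "(i, t) \<in> letters n" "(j, s) \<in> letters n" "(k, p) \<in> letters n"
    and "i \<noteq> j" "j \<noteq> k" "i \<noteq> k"
    and "z [(i, t), (j, s), (k, p)] = 0" "w \<in> S2 n (i, t) (k, p)"
  shows "z w = 0"
proof -
  have "([(i, t), (j, s), (k, p)], Psi n - S2 n (i, t) (k, p)) \<in> Grel n"
    using assms(1-6) unfolding Grel_def rel5b_def by blast
  moreover have "[(i, t), (i, t)] \<in> Psi n - S2 n (i, t) (k, p)"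
    using type1_in_Psi[OF assms(1)] assms(6) by (simp add: S2_def)
  ultimately show ?thesis
    by (rule Grel_zero_propagates) (use assms(7,8) in \<open>auto simp: S2_def\<close>)
qed

lemma type4_zero_imp_zero:
  assumes "(i, t) \<in> letters n" "(j, s) \<in> letters n" "i \<noteq> j"
    and "z [(i, t), (j, s), (i, -t)] = 0" "w \<in> Psi n"
  shows "z w = 0"
proof -
  (* A second zero of type 4, beginning with a different letter; the complements of
     S1(xi_i^t) and S1(xi_j^s) cover Psi. *)
  have "z [(j, s), (i, -t), (j, -s)] = 0"
    using type4_zero_imp_zero_off_S1[OF assms(1-4)]
      type4_in_Psi[OF assms(2) letters_uminus[OF assms(1)]] assms(3)
    by (simp add: S1_def)
  then have "z v = 0" if "v \<in> Psi n" "v \<notin> S1 n (j, s)" for v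
    using type4_zero_imp_zero_off_S1[OF assms(2) letters_uminus[OF assms(1)]] assms(3) that by auto
  moreover have "w \<notin> S1 n (i, t) \<or> w \<notin> S1 n (j, s)"
    using assms(3) by (auto simp: S1_def)
  ultimately show ?thesis
    using type4_zero_imp_zero_off_S1[OF assms(1-4)] assms(5) by blast
qed

lemma type1_zero_imp_zero:
  assumes "n \<ge> 2" "(i, t) \<in> letters n" "z [(i, t), (i, t)] = 0" "w \<in> Psi n"
  shows "z w = 0"
proof -
  obtain j where j: "(j, 1) \<in> letters n" "j \<noteq> i"
    using other_letter[OF assms(1)] .
  have "z [(i, t), (j, 1), (i, -t)] = 0"
    using type1_zero_imp_S1_zero[OF assms(1-3)] type4_in_Psi[OF assms(2) j(1)] j(2)
    by (simp add: S1_def)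
  then show ?thesis
    using type4_zero_imp_zero[OF assms(2) j(1)] j(2) assms(4) by auto
qed

lemma zero_spreads:
  assumes "n \<ge> 2" "\<psi> \<in> Psi n" "z \<psi> = 0" "w \<in> Psi n"
  shows "z w = 0"
  using assms(2) unfolding Psi_def
proof (elim UnE CollectE exE conjE)
  fix i t
  assume "\<psi> = [(i, t), (i, t)]" "(i, t) \<in> letters n"
  then show ?thesis
    using type1_zero_imp_zero[OF assms(1) _ _ assms(4)] assms(3) by blast
next
  fix i t j s
  assume \<psi>: "\<psi> = [(i, t), (j, s), (j, s)]" "(i, t) \<in> letters n" "(j, s) \<in> letters n" "i \<noteq> j"
  have "z [(i, t), (j, s), (i, -t)] = 0"
    by (rule type2_zero_imp_S2_zero[OF \<psi>(2-4)])
      (use \<psi>(1,4) assms(3) type4_in_Psi[OF \<psi>(2-4)] in \<open>auto simp: S2_def\<close>)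
  then show ?thesis
    by (rule type4_zero_imp_zero[OF \<psi>(2-4) _ assms(4)])
next
  fix i t j s k p
  assume \<psi>: "\<psi> = [(i, t), (j, s), (k, p)]" "(i, t) \<in> letters n" "(j, s) \<in> letters n"
    "(k, p) \<in> letters n" "i \<noteq> j" "j \<noteq> k"
  have "p = t \<or> p = -t"
    using \<psi>(2,4) by (auto simp: letters_def)
  then consider "k = i" "p = t" | "k = i" "p = -t" | "i \<noteq> k"
    by blast
  then show ?thesis
  proof cases
    case 1
    then have "z [(i, t), (i, t)] = 0"
      using type3_zero_imp_type1_zero[OF \<psi>(2,3,5)] \<psi>(1) assms(3) by simp
    then show ?thesis
      by (rule type1_zero_imp_zero[OF assms(1) \<psi>(2) _ assms(4)])
  next
    case 2
    then show ?thesis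
      using type4_zero_imp_zero[OF \<psi>(2,3,5) _ assms(4)] \<psi>(1) assms(3) by simp
  next
    case 3
    have "z [(i, t), (k, p), (i, -t)] = 0"
      by (rule type5_zero_imp_S2_zero[OF \<psi>(2-6) 3])
        (use \<psi>(1) assms(3) type4_in_Psi[OF \<psi>(2,4) 3] in \<open>auto simp: S2_def\<close>)
    then show ?thesis
      by (rule type4_zero_imp_zero[OF \<psi>(2,4) 3 _ assms(4)])
  qed
qed

end

theorem lemma5p1:
  fixes n :: nat
  assumes "n \<ge> 2"
  shows "\<exists>x \<in> Delta n. Gfun n x = (INF y \<in> Delta n. Gfun n y)"
  unfolding Delta_eq_open_simplex Gfun_eq_max_frel
proof (rule max_frel_attains_Inf)
  show "finite (Psi n)" "finite (Grel n)"
    by (rule finite_Psi finite_Grel)+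
  show "Psi n \<noteq> {}" "Grel n \<noteq> {}"
    using assms by (simp_all add: Psi_nonempty Grel_nonempty)
  show "\<psi> \<in> Psi n \<and> Q \<subseteq> Psi n" if "(\<psi>, Q) \<in> Grel n" for \<psi> Q
    using that by (rule Grel_subset)
  show "\<forall>w \<in> Psi n. z w = 0" if "zero_set_closed (Psi n) (Grel n) z" "\<psi> \<in> Psi n" "z \<psi> = 0"
    for z \<psi>
    using zero_spreads[OF that(1) assms that(2,3)] by blast
qed

end
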